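(* Let $\phi\ge 0$, $\sigma>0$ with $\sigma\neq 1$, $\rho>0$ and $m>0$ be constants. Consider smooth functions $c(t)>0$, $s(t)>0$, $p(t)$ satisfying $$p=c^{-\sigma}s^{\phi(1-\sigma)},\qquad \dot s=ms-c,\qquad \dot p=\Big(\rho-m-\phi\frac{c}{s}\Big)p .$$ Then the following three quantities are constant in $t$ along every such solution: $$I_1=\frac{\rho\, p\, s\, e^{-\rho t}}{(\phi+1)(1-\sigma)}-e^{-\rho t}\Big[\frac{(cs^{\phi})^{1-\sigma}}{1-\sigma}+p(ms-c)\Big],$$ $$I_2=e^{\frac{(\rho-m\phi-m)(1-\sigma)}{\sigma}t}\Big[pc-\frac{(cs^{\phi})^{1-\sigma}}{1-\sigma}\Big],$$ $$I_3=p\,s^{-\phi}e^{(m\phi+m-\rho)t}.$$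
   Context: This system is the set of first-order optimality conditions for the optimal growth problem with environmental asset: maximize $\int_0^\infty \frac{(cs^\phi)^{1-\sigma}}{1-\sigma}e^{-\rho t}dt$ subject to $\dot s=ms-c$, with current value Hamiltonian $H=\frac{(cs^{\phi})^{1-\sigma}}{1-\sigma}+p(ms-c)$; here $s$ is the stock of environmental asset, $c$ consumption and $p$ the costate variable. *)

theory Defs
  imports "HOL-Analysis.Analysis"
begin

end

theory Submission
  imports Defs
begin

text \<open>Put \<open>u = c s^\<phi>\<close>. The first-order condition says \<open>p s^(-\<phi>) = u^(-\<sigma>)\<close>, so the
  utility \<open>u^(1-\<sigma>)\<close> equals \<open>p c\<close>, and \<open>p c = (p s^(-\<phi>))^((\<sigma>-1)/\<sigma>)\<close>.
  By the two state equations \<open>p s^(-\<phi>)\<close> grows at the constant rate \<open>\<rho> - m(\<phi>+1)\<close>, which is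
  \<open>I\<^sub>3\<close>; hence \<open>p c\<close> grows exponentially too, which is \<open>I\<^sub>2\<close>. Finally \<open>e^(\<rho>t) I\<^sub>1\<close> is a
  linear combination of \<open>p s\<close> and \<open>p c\<close>; as \<open>(p s)' = \<rho> p s - (\<phi>+1) p c\<close>, the derivative of
  \<open>I\<^sub>1\<close> is a multiple of \<open>p c\<close> whose coefficient vanishes identically.\<close>

lemma exp_scaled_invariant:
  fixes f :: "real \<Rightarrow> real"
  assumes "\<And>t. (f has_real_derivative k * f t) (at t)"
  shows "f t1 * exp (- k * t1) = f t2 * exp (- k * t2)"
proof -
  have "((\<lambda>t. f t * exp (- k * t)) has_real_derivative 0) (at t)" for t
    using assms[of t] by (auto intro!: derivative_eq_intros)
  then show ?thesis
    by (intro DERIV_isconst_all) auto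
qed

lemma DERIV_of_exp_scaled_const:
  fixes f :: "real \<Rightarrow> real"
  assumes "\<And>t. f t * exp (k * t) = C"
  shows "(f has_real_derivative - k * f t) (at t)"
proof -
  have f_eq: "f = (\<lambda>t. C * exp (- k * t))"
    using assms by (auto simp: exp_minus field_simps intro!: ext)
  show ?thesis
    unfolding f_eq by (auto intro!: derivative_eq_intros)
qed

lemma powr_one_minus_eq_powr_powr:
  fixes u sigma :: real
  assumes "u > 0" "sigma \<noteq> 0"
  shows "u powr (1 - sigma) = (u powr (- sigma)) powr ((sigma - 1) / sigma)"
proof -
  have "- sigma * ((sigma - 1) / sigma) = 1 - sigma"
    using assms(2) by (simp add: field_simps)
  then show ?thesis
    by (simp add: powr_powr)
qed

locale environmental_growth_path =
  fixes phi sigma rho m :: real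
    and c s p :: "real \<Rightarrow> real"
  assumes phi_nonneg: "phi \<ge> 0" and sigma_pos: "sigma > 0" and sigma_ne_1: "sigma \<noteq> 1"
    and c_pos: "\<And>t. c t > 0" and s_pos: "\<And>t. s t > 0"
    and p_eq: "\<And>t. p t = c t powr (- sigma) * s t powr (phi * (1 - sigma))"
    and s_ode: "\<And>t. (s has_real_derivative (m * s t - c t)) (at t)"
    and p_ode: "\<And>t. (p has_real_derivative ((rho - m - phi * c t / s t) * p t)) (at t)"
begin

lemma p_s_powr_eq: "p t * s t powr (- phi) = (c t * s t powr phi) powr (- sigma)"
  using c_pos[of t] s_pos[of t]
  by (simp add: p_eq powr_mult powr_powr powr_add[symmetric] algebra_simps)

lemma p_pos: "p t > 0"
  using c_pos[of t] s_pos[of t] by (simp add: p_eq)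

lemma utility_eq_p_c: "(c t * s t powr phi) powr (1 - sigma) = p t * c t"
proof -
  have "(c t * s t powr phi) powr (1 - sigma) = c t powr (1 - sigma) * s t powr (phi * (1 - sigma))"
    using c_pos[of t] s_pos[of t] by (simp add: powr_mult powr_powr)
  also have "c t powr (1 - sigma) = c t powr (- sigma) * c t powr 1"
    by (simp only: powr_add[symmetric]) simp
  finally show ?thesis
    using c_pos[of t] by (simp add: p_eq)
qed

lemma p_c_eq_powr: "p t * c t = (p t * s t powr (- phi)) powr ((sigma - 1) / sigma)"
  using c_pos[of t] s_pos[of t] sigma_pos
  by (simp add: p_s_powr_eq utility_eq_p_c[symmetric] powr_one_minus_eq_powr_powr)

lemma DERIV_p_s_powr:
  "((\<lambda>t. p t * s t powr (- phi)) has_real_derivative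
     (rho - m * (phi + 1)) * (p t * s t powr (- phi))) (at t)"
proof -
  have "s t powr (- phi - 1) = s t powr (- phi) / s t"
    using s_pos[of t] by (simp add: powr_diff)
  then show ?thesis
    using s_pos[of t]
    by (auto intro!: derivative_eq_intros p_ode s_ode simp: field_simps)
qed

lemma invariant_3:
  "p t1 * s t1 powr (- phi) * exp ((m * phi + m - rho) * t1)
   = p t2 * s t2 powr (- phi) * exp ((m * phi + m - rho) * t2)"
proof -
  have "m * (phi + 1) = m * phi + m"
    by algebra
  then show ?thesis
    using exp_scaled_invariant[OF DERIV_p_s_powr, of t1 t2] by simp
qed

lemma p_c_exp_invariant:
  "p t1 * c t1 * exp ((m * phi + m - rho) * (sigma - 1) / sigma * t1)
   = p t2 * c t2 * exp ((m * phi + m - rho) * (sigma - 1) / sigma * t2)"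
proof -
  have "(m * phi + m - rho) * (sigma - 1) / sigma * t
        = (m * phi + m - rho) * t * ((sigma - 1) / sigma)" for t
    by simp
  moreover have "(p t * s t powr (- phi) * exp ((m * phi + m - rho) * t)) powr ((sigma - 1) / sigma)
        = p t * c t * exp ((m * phi + m - rho) * t * ((sigma - 1) / sigma))" for t
    using p_pos[of t] s_pos[of t] by (simp add: p_c_eq_powr powr_mult exp_powr_real)
  ultimately have "p t * c t * exp ((m * phi + m - rho) * (sigma - 1) / sigma * t)
        = (p t * s t powr (- phi) * exp ((m * phi + m - rho) * t)) powr ((sigma - 1) / sigma)" for t
    by simp
  then show ?thesis
    using invariant_3 by metis
qed

lemma invariant_2:
  "exp ((rho - m * phi - m) * (1 - sigma) / sigma * t1)
     * (p t1 * c t1 - (c t1 * s t1 powr phi) powr (1 - sigma) / (1 - sigma))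
   = exp ((rho - m * phi - m) * (1 - sigma) / sigma * t2)
     * (p t2 * c t2 - (c t2 * s t2 powr phi) powr (1 - sigma) / (1 - sigma))"
proof -
  have "(rho - m * phi - m) * (1 - sigma) = (m * phi + m - rho) * (sigma - 1)"
    by algebra
  then have "exp ((rho - m * phi - m) * (1 - sigma) / sigma * t)
       * (p t * c t - (c t * s t powr phi) powr (1 - sigma) / (1 - sigma))
     = p t * c t * exp ((m * phi + m - rho) * (sigma - 1) / sigma * t) * (1 - 1 / (1 - sigma))" for t
    by (simp add: utility_eq_p_c algebra_simps)
  then show ?thesis
    using p_c_exp_invariant[of t1 t2] by simp
qed

lemma DERIV_p_s:
  "((\<lambda>t. p t * s t) has_real_derivative rho * (p t * s t) - (phi + 1) * (p t * c t)) (at t)"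
  using s_pos[of t] by (auto intro!: derivative_eq_intros p_ode s_ode simp: field_simps)

lemma DERIV_p_c:
  "((\<lambda>t. p t * c t) has_real_derivative
     - ((m * phi + m - rho) * (sigma - 1) / sigma) * (p t * c t)) (at t)"
  by (rule DERIV_of_exp_scaled_const) (rule p_c_exp_invariant)

lemma invariant_1:
  "rho * p t1 * s t1 * exp (- rho * t1) / ((phi + 1) * (1 - sigma))
     - exp (- rho * t1) * ((c t1 * s t1 powr phi) powr (1 - sigma) / (1 - sigma)
                           + p t1 * (m * s t1 - c t1))
   = rho * p t2 * s t2 * exp (- rho * t2) / ((phi + 1) * (1 - sigma))
     - exp (- rho * t2) * ((c t2 * s t2 powr phi) powr (1 - sigma) / (1 - sigma)
                           + p t2 * (m * s t2 - c t2))"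
proof -
  define A where "A = rho / ((phi + 1) * (1 - sigma)) - m"
  define B where "B = sigma / (1 - sigma)"
  define k where "k = (m * phi + m - rho) * (sigma - 1) / sigma"
  have phi1: "phi + 1 \<noteq> 0" and sigma1: "1 - sigma \<noteq> 0"
    using phi_nonneg sigma_ne_1 by auto
  have I1_eq: "rho * p t * s t * exp (- rho * t) / ((phi + 1) * (1 - sigma))
      - exp (- rho * t) * ((c t * s t powr phi) powr (1 - sigma) / (1 - sigma)
                           + p t * (m * s t - c t))
    = exp (- rho * t) * (A * (p t * s t) - B * (p t * c t))" for t
    using phi1 sigma1 by (simp add: utility_eq_p_c A_def B_def field_simps)
  have "B * k = rho - m * (phi + 1)"
    using sigma1 sigma_pos by (simp add: B_def k_def field_simps)
  moreover have "rho * B - A * (phi + 1) = m * (phi + 1) - rho"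
    using phi1 sigma1 unfolding A_def B_def by (simp add: divide_simps) algebra
  ultimately have coefficient: "rho * B - A * (phi + 1) + B * k = 0"
    by simp
  have "((\<lambda>t. exp (- rho * t) * (A * (p t * s t) - B * (p t * c t))) has_real_derivative
      exp (- rho * t) * (- rho) * (A * (p t * s t) - B * (p t * c t))
      + (A * (rho * (p t * s t) - (phi + 1) * (p t * c t)) - B * (- k * (p t * c t)))
        * exp (- rho * t)) (at t)" for t
    by (intro DERIV_mult DERIV_diff DERIV_cmult DERIV_p_s DERIV_p_c[folded k_def])
      (auto intro!: derivative_eq_intros)
  moreover have "exp (- rho * t) * (- rho) * (A * (p t * s t) - B * (p t * c t))
      + (A * (rho * (p t * s t) - (phi + 1) * (p t * c t)) - B * (- k * (p t * c t)))
        * exp (- rho * t)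
    = exp (- rho * t) * (p t * c t) * (rho * B - A * (phi + 1) + B * k)" for t
    by (simp add: algebra_simps)
  ultimately have "((\<lambda>t. exp (- rho * t) * (A * (p t * s t) - B * (p t * c t))) has_real_derivative 0) (at t)" for t
    by (simp add: coefficient)
  then show ?thesis
    unfolding I1_eq by (intro DERIV_isconst_all) auto
qed

end

theorem mainTheorem1:
  fixes phi sigma rho m :: real
    and c s p :: "real \<Rightarrow> real"
  assumes phi: "phi \<ge> 0" and sig: "sigma > 0" "sigma \<noteq> 1"
    and rho: "rho > 0" and mpos: "m > 0"
    and c_pos: "\<And>t. c t > 0" and s_pos: "\<And>t. s t > 0"
    and c_diff: "\<And>t. c differentiable (at t)"
    and p_eq: "\<And>t. p t = c t powr (- sigma) * s t powr (phi * (1 - sigma))"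
    and s_ode: "\<And>t. (s has_real_derivative (m * s t - c t)) (at t)"
    and p_ode: "\<And>t. (p has_real_derivative ((rho - m - phi * c t / s t) * p t)) (at t)"
  shows "(\<forall>t1 t2.
      rho * p t1 * s t1 * exp (- rho * t1) / ((phi + 1) * (1 - sigma))
        - exp (- rho * t1) * ((c t1 * s t1 powr phi) powr (1 - sigma) / (1 - sigma)
                               + p t1 * (m * s t1 - c t1))
    = rho * p t2 * s t2 * exp (- rho * t2) / ((phi + 1) * (1 - sigma))
        - exp (- rho * t2) * ((c t2 * s t2 powr phi) powr (1 - sigma) / (1 - sigma)
                               + p t2 * (m * s t2 - c t2)))
    \<and> (\<forall>t1 t2.
      exp ((rho - m * phi - m) * (1 - sigma) / sigma * t1)
        * (p t1 * c t1 - (c t1 * s t1 powr phi) powr (1 - sigma) / (1 - sigma))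
    = exp ((rho - m * phi - m) * (1 - sigma) / sigma * t2)
        * (p t2 * c t2 - (c t2 * s t2 powr phi) powr (1 - sigma) / (1 - sigma)))
    \<and> (\<forall>t1 t2.
      p t1 * s t1 powr (- phi) * exp ((m * phi + m - rho) * t1)
    = p t2 * s t2 powr (- phi) * exp ((m * phi + m - rho) * t2))"
proof -
  interpret environmental_growth_path phi sigma rho m c s p
    using assms by unfold_locales auto
  show ?thesis
    using invariant_1 invariant_2 invariant_3 by blast
qed

end
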